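(* Let $I\subseteq R$ be a good ideal, let $a_1,\dots,a_n\in\mathbb N$ with $a=a_1+\dots+a_n$, and let $t\ge1$ be an integer. Then $$I^{a+t}:\langle\mu_1^{a_1}\cdots\mu_n^{a_n}\rangle=\sum_{\substack{t_1,\dots,t_n\ge0\\ t_1+\dots+t_n=t-1}}\mu_1^{t_1}\cdots\mu_n^{t_n}\, I_{t_1+a_1,\dots,t_n+a_n}.$$
   Context: Let $\mathbb K$ be a field, $R=\mathbb K[x_1,\dots,x_n]$, $\mathfrak m=\langle x_1,\dots,x_n\rangle$, $\mathbb N=\{0,1,2,\dots\}$. A monomial $x_1^{\alpha_1}\cdots x_n^{\alpha_n}$ is identified with the point $(\alpha_1,\dots,\alpha_n)\in\mathbb N^n$. For a monomial ideal $I$, $G(I)$ denotes its (unique) minimal monomial generating set. If $I$ is an $\mathfrak m$-primary monomial ideal, then for each $i$ there is a unique $d_i\ge1$ with $x_i^{d_i}\in G(I)$; write $\mu_i=x_i^{d_i}$. For $(a_1,\dots,a_n)\in\mathbb N^n$ the box associated to $I$ is $B_{a_1,\dots,a_n}=([a_1d_1,(a_1+1)d_1]\times\cdots\times[a_nd_n,(a_n+1)d_n])\cap\mathbb N^n$; a monomial belongs to a box if its exponent vector does. An $\mathfrak m$-primary monomial ideal $I$ is called good if for every integer $l\ge1$, every element of $G(I^l)$ belongs to some box $B_{a_1,\dots,a_n}$ with $a_1+\dots+a_n=l-1$. For a good ideal $I$ and $a=(a_1,\dots,a_n)\in\mathbb N^n$, with $l=a_1+\dots+a_n+1$, define $I_{a_1,\dots,a_n}=\left\langle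 \frac{m}{\mu_1^{a_1}\cdots\mu_n^{a_n}} : m\in B_{a_1,\dots,a_n}\cap G(I^l)\right\rangle$. *)

theory Defs
  imports Main
begin

text \<open>Monomials of K[x_i : i in 'n] are identified with exponent vectors 'n => nat
  (the index type 'n is finite, n = CARD('n)). A monomial ideal is identified with the
  set of monomials it contains, i.e. an upward closed subset of N^n.\<close>

type_synonym 'n monomial = "'n \<Rightarrow> nat"

definition mon_ideal :: "('n::finite) monomial set \<Rightarrow> bool" where
  "mon_ideal I \<longleftrightarrow> (\<forall>m\<in>I. \<forall>m'. m \<le> m' \<longrightarrow> m' \<in> I)"

definition mgen :: "('n::finite) monomial set \<Rightarrow> 'n monomial set" where
  "mgen S = {m. \<exists>s\<in>S. s \<le> m}"

definition mingens :: "('n::finite) monomial set \<Rightarrow> 'n monomial set" where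
  "mingens I = {m\<in>I. \<forall>m'\<in>I. m' \<le> m \<longrightarrow> m' = m}"

definition mprod :: "('n::finite) monomial set \<Rightarrow> 'n monomial set \<Rightarrow> 'n monomial set" where
  "mprod I J = mgen {(\<lambda>i. a i + b i) | a b. a \<in> I \<and> b \<in> J}"

fun mpow :: "('n::finite) monomial set \<Rightarrow> nat \<Rightarrow> 'n monomial set" where
  "mpow I 0 = UNIV"
| "mpow I (Suc l) = mprod I (mpow I l)"

definition mcolon :: "('n::finite) monomial set \<Rightarrow> 'n monomial \<Rightarrow> 'n monomial set" where
  "mcolon I u = {m. (\<lambda>i. m i + u i) \<in> I}"

definition mshift :: "('n::finite) monomial \<Rightarrow> 'n monomial set \<Rightarrow> 'n monomial set" where
  "mshift u J = mgen {(\<lambda>i. u i + m i) | m. m \<in> J}"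

definition xpow :: "('n::finite) \<Rightarrow> nat \<Rightarrow> 'n monomial" where
  "xpow i d = (\<lambda>j. if j = i then d else 0)"

text \<open>m-primary monomial ideal: proper (contained in m, i.e. 1 not in I) and containing
  a pure power of every variable.\<close>
definition m_primary :: "('n::finite) monomial set \<Rightarrow> bool" where
  "m_primary I \<longleftrightarrow> mon_ideal I \<and> (\<lambda>_. 0) \<notin> I \<and> (\<forall>i. \<exists>d. xpow i d \<in> I)"

definition dexp :: "('n::finite) monomial set \<Rightarrow> 'n \<Rightarrow> nat" where
  "dexp I i = (LEAST d. xpow i d \<in> I)"

definition mupow :: "('n::finite) monomial set \<Rightarrow> 'n monomial \<Rightarrow> 'n monomial" where
  "mupow I a = (\<lambda>i. a i * dexp I i)"

definition box :: "('n::finite) monomial set \<Rightarrow> 'n monomial \<Rightarrow> 'n monomial set" where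
  "box I a = {m. \<forall>i. a i * dexp I i \<le> m i \<and> m i \<le> (a i + 1) * dexp I i}"

definition good :: "('n::finite) monomial set \<Rightarrow> bool" where
  "good I \<longleftrightarrow> m_primary I \<and>
     (\<forall>l\<ge>1. \<forall>m\<in>mingens (mpow I l). \<exists>a. sum a UNIV = l - 1 \<and> m \<in> box I a)"

definition Isub :: "('n::finite) monomial set \<Rightarrow> 'n monomial \<Rightarrow> 'n monomial set" where
  "Isub I a = mgen {(\<lambda>i. m i - mupow I a i) | m.
                     m \<in> box I a \<inter> mingens (mpow I (sum a UNIV + 1))}"

end

theory Submission
  imports Defs
begin

text \<open>
  For a monomial x put y = x \<mu>^a and l = |a| + t. The key fact is rigidity: for every b, no element of I^|b|
  lies strictly below \<mu>^b, so \<mu>^b is a minimal generator of I^|b|; otherwise a suitable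
  multiple of a smaller element would contradict the box condition in a higher power of I.
  If y \<in> I^l, a minimal generator of I^l below y lies in a box B_b with |b| = l - 1, and
  interpolating between a and max a b gives c \<ge> a with |c| = l - 1 and \<mu>^c dividing y. Then
  some minimal generator m of I^l in B_c divides y: if y leaves B_c in direction j, take
  \<mu>^(c + e_j); otherwise every minimal generator below y is trapped in B_c. Writing
  m = \<mu>^(c - a) \<mu>^a (m / \<mu>^c) puts x into \<mu>^(c - a) I_c. The reverse inclusion holds
  because these generators lie in I^l.
\<close>

lemma mem_mgenI: "s \<in> S \<Longrightarrow> s \<le> m \<Longrightarrow> m \<in> mgen S"
  by (auto simp: mgen_def)

lemma mpow_upclosed: "v \<in> mpow I l \<Longrightarrow> v \<le> w \<Longrightarrow> w \<in> mpow I l"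
  by (cases l) (auto simp: mprod_def mgen_def intro: order_trans)

lemma mprod_memI: "v \<in> I \<Longrightarrow> w \<in> J \<Longrightarrow> (\<lambda>i. v i + w i) \<in> mprod I J"
  unfolding mprod_def by (rule mem_mgenI[OF _ order_refl]) blast

lemma mem_mpow_one: "v \<in> I \<Longrightarrow> v \<in> mpow I 1"
  using mprod_memI[of v I "\<lambda>_. 0" UNIV] by simp

lemma mpow_add_mem:
  "v \<in> mpow I p \<Longrightarrow> w \<in> mpow I q \<Longrightarrow> (\<lambda>i. v i + w i) \<in> mpow I (p + q)"
proof (induction p arbitrary: v)
  case 0
  then show ?case using mpow_upclosed[of w I q] by (auto simp: le_fun_def)
next
  case (Suc p)
  from Suc.prems(1) obtain g u where "g \<in> I" "u \<in> mpow I p" "(\<lambda>i. g i + u i) \<le> v"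
    by (auto simp: mprod_def mgen_def)
  with Suc have "(\<lambda>i. g i + (u i + w i)) \<in> mpow I (Suc p + q)"
    by (simp add: mprod_memI)
  moreover have "(\<lambda>i. g i + (u i + w i)) \<le> (\<lambda>i. v i + w i)"
    using \<open>(\<lambda>i. g i + u i) \<le> v\<close> by (auto simp: le_fun_def)
  ultimately show ?case by (rule mpow_upclosed)
qed

lemma mpow_scale_mem: "v \<in> mpow I l \<Longrightarrow> (\<lambda>i. k * v i) \<in> mpow I (k * l)"
  by (induction k) (simp_all add: mpow_add_mem)

lemma le_fun_antisym_sum:
  fixes u v :: "'n::finite \<Rightarrow> nat"
  assumes "u \<le> v" and "sum v UNIV \<le> sum u UNIV"
  shows "u = v"
proof
  fix i
  have "sum u UNIV = sum v UNIV"
    using assms sum_mono[of UNIV u v] by (simp add: le_fun_def)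
  then show "u i = v i"
    using assms(1) by (intro sum_mono_inv[of u UNIV v]) (auto simp: le_fun_def)
qed

lemma mingens_below:
  fixes S :: "('n::finite) monomial set"
  assumes "v \<in> S"
  shows "\<exists>m\<in>mingens S. m \<le> v"
proof -
  obtain m where m: "m \<in> S" "m \<le> v"
    and least: "\<And>u. u \<in> S \<Longrightarrow> u \<le> v \<Longrightarrow> sum m UNIV \<le> sum u UNIV"
    using ex_has_least_nat[of "\<lambda>m. m \<in> S \<and> m \<le> v" v "\<lambda>m. sum m UNIV"] assms by auto
  have "m \<in> mingens S"
    unfolding mingens_def
    using m least order_trans by (blast intro: le_fun_antisym_sum)
  with m show ?thesis by blast
qed

lemma mingens_subset: "mingens S \<subseteq> S"
  by (auto simp: mingens_def)

lemma good_mingens_in_box: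
  "good I \<Longrightarrow> l \<ge> 1 \<Longrightarrow> m \<in> mingens (mpow I l) \<Longrightarrow> \<exists>a. sum a UNIV = l - 1 \<and> m \<in> box I a"
  by (auto simp: good_def)

lemma sum_xpow: "sum (xpow i d) UNIV = d"
  by (simp add: xpow_def)

lemma xpow_dexp_mem: "good I \<Longrightarrow> xpow i (dexp I i) \<in> I"
  unfolding dexp_def good_def m_primary_def by (meson LeastI_ex)

lemma dexp_pos: "good I \<Longrightarrow> dexp I i > 0"
proof (rule ccontr)
  assume "good I" and "\<not> dexp I i > 0"
  then have "(\<lambda>_. 0) \<in> I"
    using xpow_dexp_mem[of I i] by (simp add: xpow_def)
  with \<open>good I\<close> show False
    by (simp add: good_def m_primary_def)
qed

lemma mupow_mem_mpow:
  fixes I :: "('n::finite) monomial set"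
  assumes "good I"
  shows "mupow I c \<in> mpow I (sum c UNIV)"
proof -
  have "(\<lambda>k. \<Sum>i\<in>A. c i * xpow i (dexp I i) k) \<in> mpow I (sum c A)" for A :: "'n set"
  proof (induction A rule: infinite_finite_induct)
    case (insert i A)
    have "(\<lambda>k. c i * xpow i (dexp I i) k) \<in> mpow I (c i * 1)"
      using assms by (intro mpow_scale_mem mem_mpow_one xpow_dexp_mem)
    with insert show ?case by (simp add: mpow_add_mem)
  qed simp_all
  from this[of UNIV] show ?thesis
    by (simp add: mupow_def xpow_def if_distrib[of "(*) _"] cong: if_cong)
qed

lemma mpow_below_mupow:
  fixes I :: "('n::finite) monomial set"
  assumes good: "good I" and v: "v \<in> mpow I (sum b UNIV)" and le: "v \<le> mupow I b"
  shows "v = mupow I b"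
proof (rule ccontr)
  define d where "d = dexp I"
  define L where "L = sum b UNIV"
  have d_pos: "d k > 0" for k
    using dexp_pos[OF good] by (simp add: d_def)
  have vb: "v k \<le> b k * d k" for k
    using le by (simp add: le_fun_def mupow_def d_def)
  assume "v \<noteq> mupow I b"
  then obtain i where vi: "v i < b i * d i"
    using le by (auto simp: fun_eq_iff le_fun_def mupow_def d_def order.order_iff_strict)
  \<comment> \<open>Scaling by K = 2 d_i widens the gap at coordinate i to two boxes, which the box
    condition on the minimal generators of I^(KL) cannot absorb.\<close>
  define K where "K = 2 * d i"
  have "b i \<le> L"
    unfolding L_def by (rule member_le_sum) auto
  moreover have "b i \<noteq> 0"
    using vi by (metis less_zeroE mult_0)
  ultimately have "L \<ge> 1"
    by linarith
  then have KL: "K * L \<ge> 1"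
    using d_pos[of i] by (simp add: K_def)
  obtain m where m: "m \<in> mingens (mpow I (K * L))" "m \<le> (\<lambda>k. K * v k)"
    using mingens_below[OF mpow_scale_mem[OF v]] by (auto simp: L_def)
  then obtain c where c: "sum c UNIV = K * L - 1" "m \<in> box I c"
    using good_mingens_in_box[OF good KL m(1)] by blast
  have cv: "c k * d k \<le> K * v k" for k
    using c(2) m(2) by (auto simp: box_def d_def le_fun_def intro: order_trans)
  have "c k * d k \<le> (K * b k) * d k" for k
  proof -
    have "c k * d k \<le> K * v k" by (rule cv)
    also have "\<dots> \<le> K * (b k * d k)" using vb by (rule mult_le_mono2)
    finally show ?thesis by (simp only: mult.assoc)
  qed
  then have ck: "c k \<le> K * b k" for k
    using d_pos[of k] by simp
  have "(c i + 2) * d i = c i * d i + K"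
    by (simp add: K_def algebra_simps)
  also have "\<dots> \<le> K * (v i + 1)"
    using cv[of i] by simp
  also have "\<dots> \<le> K * (b i * d i)"
    using vi by (intro mult_le_mono2) simp
  finally have "(c i + 2) * d i \<le> (K * b i) * d i"
    by (simp only: mult.assoc)
  then have ci: "c i + 2 \<le> K * b i"
    using d_pos[of i] mult_le_cancel2 by blast
  have "sum (\<lambda>k. c k + xpow i 2 k) UNIV \<le> sum (\<lambda>k. K * b k) UNIV"
    using ck ci by (intro sum_mono) (simp add: xpow_def)
  then have "K * L - 1 + 2 \<le> K * L"
    by (simp add: sum.distrib sum_xpow c(1) sum_distrib_left[symmetric] L_def)
  with KL show False by linarith
qed

lemma mupow_mingens:
  "good I \<Longrightarrow> mupow I b \<in> mingens (mpow I (sum b UNIV))"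
  using mupow_mem_mpow mpow_below_mupow by (fastforce simp: mingens_def)

lemma exists_between_sum:
  fixes a f :: "'n::finite \<Rightarrow> nat"
  assumes "sum a UNIV \<le> s" and "a \<le> f" and "s \<le> sum f UNIV"
  shows "\<exists>c. a \<le> c \<and> c \<le> f \<and> sum c UNIV = s"
  using assms
proof (induction s rule: nat_induct_at_least)
  case base
  then show ?case by blast
next
  case (Suc s)
  then obtain c where c: "a \<le> c" "c \<le> f" "sum c UNIV = s"
    by auto
  have "\<not> f \<le> c"
    using Suc.prems c(3) sum_mono[of UNIV f c] by (auto simp: le_fun_def)
  then obtain i where i: "c i < f i"
    by (auto simp: le_fun_def not_le)
  have "a \<le> (\<lambda>k. c k + xpow i 1 k)" and "(\<lambda>k. c k + xpow i 1 k) \<le> f"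
    using c(1,2) i by (auto simp: le_fun_def xpow_def intro: le_SucI)
  moreover have "sum (\<lambda>k. c k + xpow i 1 k) UNIV = Suc s"
    by (simp add: sum.distrib sum_xpow c(3))
  ultimately show ?case by blast
qed

lemma mupow_mono: "c \<le> c' \<Longrightarrow> mupow I c \<le> mupow I c'"
  by (simp add: le_fun_def mupow_def)

lemma mingens_in_box_below:
  fixes I :: "('n::finite) monomial set"
  assumes good: "good I" and y: "y \<in> mpow I (Suc (sum c UNIV))" and cy: "mupow I c \<le> y"
  shows "\<exists>m\<in>box I c \<inter> mingens (mpow I (Suc (sum c UNIV))). m \<le> y"
proof (cases "\<exists>j. (c j + 1) * dexp I j \<le> y j")
  case True
  then obtain j where j: "(c j + 1) * dexp I j \<le> y j"
    by blast
  define c' where "c' = (\<lambda>k. c k + xpow j 1 k)"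
  have "sum c' UNIV = Suc (sum c UNIV)"
    by (simp add: c'_def sum.distrib sum_xpow)
  then have "mupow I c' \<in> mingens (mpow I (Suc (sum c UNIV)))"
    using mupow_mingens[OF good, of c'] by simp
  moreover have "mupow I c' \<in> box I c" and "mupow I c' \<le> y"
    using cy j by (auto simp: box_def mupow_def c'_def xpow_def le_fun_def)
  ultimately show ?thesis by blast
next
  case False
  obtain m where m: "m \<in> mingens (mpow I (Suc (sum c UNIV)))" "m \<le> y"
    using mingens_below[OF y] by blast
  then obtain c' where c': "sum c' UNIV = sum c UNIV" "m \<in> box I c'"
    using good_mingens_in_box[OF good _ m(1)] by auto
  have "c' k * dexp I k < (c k + 1) * dexp I k" for k
  proof -
    have "c' k * dexp I k \<le> m k" using c'(2) by (simp add: box_def)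
    also have "\<dots> \<le> y k" using m(2) by (simp add: le_fun_def)
    also have "\<dots> < (c k + 1) * dexp I k" using False by (simp add: not_le)
    finally show ?thesis .
  qed
  then have "c' k < c k + 1" for k
    using mult_less_cancel2 by blast
  then have "c' \<le> c"
    by (simp add: le_fun_def less_Suc_eq_le)
  then have "c' = c"
    using c'(1) by (intro le_fun_antisym_sum) simp_all
  with c' m show ?thesis by blast
qed

lemma exists_mupow_below:
  fixes I :: "('n::finite) monomial set"
  assumes good: "good I" and y: "y \<in> mpow I l" and "sum a UNIV < l" and ay: "mupow I a \<le> y"
  shows "\<exists>c. a \<le> c \<and> sum c UNIV = l - 1 \<and> mupow I c \<le> y"
proof -
  obtain m where m: "m \<in> mingens (mpow I l)" "m \<le> y"
    using mingens_below[OF y] by blast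
  then obtain b where b: "sum b UNIV = l - 1" "m \<in> box I b"
    using good_mingens_in_box[OF good _ m(1)] \<open>sum a UNIV < l\<close> by auto
  define f where "f = (\<lambda>k. max (a k) (b k))"
  have "mupow I b \<le> y"
    using b(2) m(2) by (auto simp: box_def mupow_def le_fun_def intro: order_trans)
  with ay have fy: "mupow I f \<le> y"
    by (auto simp: le_fun_def mupow_def f_def max_def)
  have "a \<le> f"
    by (simp add: le_fun_def f_def)
  have "l - 1 \<le> sum f UNIV"
    unfolding b(1)[symmetric] f_def by (intro sum_mono) simp
  moreover have "sum a UNIV \<le> l - 1"
    using \<open>sum a UNIV < l\<close> by simp
  ultimately obtain c where "a \<le> c" "c \<le> f" "sum c UNIV = l - 1"
    using exists_between_sum[OF _ \<open>a \<le> f\<close>] by blast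
  with fy show ?thesis
    using mupow_mono[of c f I] order_trans by blast
qed

lemma mem_mshift_Isub_iff:
  "x \<in> mshift (mupow I tv) (Isub I (\<lambda>i. tv i + a i)) \<longleftrightarrow>
     (\<exists>m\<in>box I (\<lambda>i. tv i + a i) \<inter> mingens (mpow I (sum (\<lambda>i. tv i + a i) UNIV + 1)).
        m \<le> (\<lambda>i. x i + mupow I a i))"
  (is "_ \<longleftrightarrow> (\<exists>m\<in>?G. _)")
proof
  assume "x \<in> mshift (mupow I tv) (Isub I (\<lambda>i. tv i + a i))"
  then obtain u m where m: "m \<in> ?G" "(\<lambda>i. m i - mupow I (\<lambda>i. tv i + a i) i) \<le> u"
    and u: "(\<lambda>i. mupow I tv i + u i) \<le> x"
    by (auto simp: mshift_def Isub_def mgen_def)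
  have "m i \<le> x i + mupow I a i" for i
  proof -
    have "mupow I (\<lambda>i. tv i + a i) i \<le> m i"
      using m(1) by (simp add: box_def mupow_def)
    moreover have "m i - mupow I (\<lambda>i. tv i + a i) i \<le> u i"
      using m(2) by (simp add: le_fun_def)
    moreover have "mupow I tv i + u i \<le> x i"
      using u by (simp add: le_fun_def)
    ultimately show ?thesis
      by (simp add: mupow_def add_mult_distrib)
  qed
  then have "m \<le> (\<lambda>i. x i + mupow I a i)"
    by (simp add: le_fun_def)
  with m(1) show "\<exists>m\<in>?G. m \<le> (\<lambda>i. x i + mupow I a i)"
    by blast
next
  assume "\<exists>m\<in>?G. m \<le> (\<lambda>i. x i + mupow I a i)"
  then obtain m where m: "m \<in> ?G" "m \<le> (\<lambda>i. x i + mupow I a i)"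
    by blast
  define u where "u = (\<lambda>i. m i - mupow I (\<lambda>i. tv i + a i) i)"
  have "u \<in> Isub I (\<lambda>i. tv i + a i)"
    unfolding Isub_def u_def using m(1) by (intro mem_mgenI[OF _ order_refl]) blast
  moreover have "mupow I tv i + u i \<le> x i" for i
  proof -
    have "mupow I (\<lambda>i. tv i + a i) i \<le> m i"
      using m(1) by (simp add: box_def mupow_def)
    moreover have "m i \<le> x i + mupow I a i"
      using m(2) by (simp add: le_fun_def)
    ultimately show ?thesis
      by (simp add: u_def mupow_def add_mult_distrib)
  qed
  ultimately show "x \<in> mshift (mupow I tv) (Isub I (\<lambda>i. tv i + a i))"
    unfolding mshift_def by (blast intro: mem_mgenI le_funI)
qed

lemma mcolon_mpow_mem_mshift_Isub:
  fixes I :: "('n::finite) monomial set"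
  assumes good: "good I" and "t \<ge> 1" and x: "x \<in> mcolon (mpow I (sum a UNIV + t)) (mupow I a)"
  shows "\<exists>tv. sum tv UNIV = t - 1 \<and> x \<in> mshift (mupow I tv) (Isub I (\<lambda>i. tv i + a i))"
proof -
  let ?y = "\<lambda>i. x i + mupow I a i"
  have y: "?y \<in> mpow I (sum a UNIV + t)"
    using x by (simp add: mcolon_def)
  moreover have "sum a UNIV < sum a UNIV + t" and "mupow I a \<le> ?y"
    using \<open>t \<ge> 1\<close> by (simp_all add: le_fun_def)
  ultimately obtain c where c: "a \<le> c" "sum c UNIV = sum a UNIV + t - 1" "mupow I c \<le> ?y"
    using exists_mupow_below[OF good] by blast
  have "Suc (sum c UNIV) = sum a UNIV + t"
    using c(2) \<open>t \<ge> 1\<close> by simp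
  then obtain m where m: "m \<in> box I c \<inter> mingens (mpow I (sum c UNIV + 1))" "m \<le> ?y"
    using mingens_in_box_below[OF good _ c(3)] y by (metis IntE Suc_eq_plus1)
  define tv where "tv = (\<lambda>i. c i - a i)"
  have tv: "(\<lambda>i. tv i + a i) = c" "sum tv UNIV = t - 1"
    using c(1,2) by (auto simp: tv_def le_fun_def sum_subtractf_nat)
  have "x \<in> mshift (mupow I tv) (Isub I (\<lambda>i. tv i + a i))"
    using mem_mshift_Isub_iff[of x I tv a] m unfolding tv(1) by blast
  with tv(2) show ?thesis
    by blast
qed

lemma mshift_Isub_subset_mcolon:
  assumes "t \<ge> 1" and tv: "sum tv UNIV = t - 1"
  shows "mshift (mupow I tv) (Isub I (\<lambda>i. tv i + a i)) \<subseteq> mcolon (mpow I (sum a UNIV + t)) (mupow I a)"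
proof
  fix x
  assume "x \<in> mshift (mupow I tv) (Isub I (\<lambda>i. tv i + a i))"
  then obtain m where m: "m \<in> mingens (mpow I (sum (\<lambda>i. tv i + a i) UNIV + 1))"
    "m \<le> (\<lambda>i. x i + mupow I a i)"
    unfolding mem_mshift_Isub_iff by blast
  have "sum (\<lambda>i. tv i + a i) UNIV + 1 = sum a UNIV + t"
    using tv \<open>t \<ge> 1\<close> by (simp add: sum.distrib)
  with m have "(\<lambda>i. x i + mupow I a i) \<in> mpow I (sum a UNIV + t)"
    using mingens_subset mpow_upclosed by (metis subsetD)
  then show "x \<in> mcolon (mpow I (sum a UNIV + t)) (mupow I a)"
    by (simp add: mcolon_def)
qed

theorem mainTheorem16:
  fixes I :: "('n::finite) monomial set" and a :: "'n monomial" and t :: nat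
  assumes "good I" and "t \<ge> 1"
  shows "mcolon (mpow I (sum a UNIV + t)) (mupow I a) =
           (\<Union>tv\<in>{tv :: 'n monomial. sum tv UNIV = t - 1}.
              mshift (mupow I tv) (Isub I (\<lambda>i. tv i + a i)))"
proof
  show "mcolon (mpow I (sum a UNIV + t)) (mupow I a) \<subseteq>
          (\<Union>tv\<in>{tv. sum tv UNIV = t - 1}. mshift (mupow I tv) (Isub I (\<lambda>i. tv i + a i)))"
    using mcolon_mpow_mem_mshift_Isub[OF assms] by blast
  show "(\<Union>tv\<in>{tv. sum tv UNIV = t - 1}. mshift (mupow I tv) (Isub I (\<lambda>i. tv i + a i))) \<subseteq>
          mcolon (mpow I (sum a UNIV + t)) (mupow I a)"
    using mshift_Isub_subset_mcolon[OF assms(2)] by blast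
qed

end
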